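(* Let $S_{(1,1)}(x)=\sum_{p\ge1}\binom{2p}{p}x^{2p}$, $C^\bullet_{(1,1)}(x)=\sum_{n\ge1}\varphi(n)S_{(1,1)}(x^n)$ and $0<x<1/2$. Consider the procedure: draw $N\in\mathbb{N}^*$ with $\mathbb{P}(N=n)=\varphi(n)S_{(1,1)}(x^n)/C^\bullet_{(1,1)}(x)$; given $N=n$, draw a nonempty $(1,1)$-balanced word $w$ with probability $x^{n|w|}/S_{(1,1)}(x^n)$; output the necklace of $w^n$. Then each $(1,1)$-balanced necklace $c$ is output with probability $|c|\,x^{|c|}/C^\bullet_{(1,1)}(x)$; consequently, pointing the output at a uniformly random position in $\{1,\dots,|c|\}$ yields a Boltzmann sampler with parameter $x$ for $\Theta Cyc_{(1,1)}$. *)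

theory Defs
  imports "HOL-Analysis.Analysis" "HOL-Number_Theory.Number_Theory"
begin

text \<open>Words over the two-letter alphabet {a,b}, encoded as bool lists (True = a, False = b).\<close>

definition balanced11 :: "bool list \<Rightarrow> bool" where
  "balanced11 w \<longleftrightarrow> w \<noteq> [] \<and> count_list w True = count_list w False"

definition necklace :: "bool list \<Rightarrow> bool list set" where
  "necklace w = {rotate k w | k. True}"

definition bal_necklace :: "bool list set \<Rightarrow> bool" where
  "bal_necklace c \<longleftrightarrow> (\<exists>w. balanced11 w \<and> c = necklace w)"

definition neck_len :: "bool list set \<Rightarrow> nat" where
  "neck_len c = length (SOME w. w \<in> c)"

definition wpow :: "bool list \<Rightarrow> nat \<Rightarrow> bool list" where
  "wpow w n = concat (replicate n w)"

text \<open>S_{(1,1)}(x) = sum_{p>=1} binom(2p,p) x^(2p)  (the p = 0 term equals 1).\<close>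
definition S11 :: "real \<Rightarrow> real" where
  "S11 x = (\<Sum>p. real ((2*p) choose p) * x ^ (2*p)) - 1"

definition C11 :: "real \<Rightarrow> real" where
  "C11 x = (\<Sum>m. real (totient (Suc m)) * S11 (x ^ Suc m))"

definition draw_prob :: "real \<Rightarrow> nat \<Rightarrow> bool list \<Rightarrow> real" where
  "draw_prob x n w =
     (real (totient n) * S11 (x ^ n) / C11 x) * (x ^ (n * length w) / S11 (x ^ n))"

definition draws_to :: "bool list set \<Rightarrow> (nat \<times> bool list) set" where
  "draws_to c = {(n, w). n \<ge> 1 \<and> balanced11 w \<and> necklace (wpow w n) = c}"

definition out_prob :: "real \<Rightarrow> bool list set \<Rightarrow> real" where
  "out_prob x c = infsum (\<lambda>(n, w). draw_prob x n w) (draws_to c)"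

definition ThetaCyc11 :: "real \<Rightarrow> real" where
  "ThetaCyc11 x = infsum (\<lambda>c. real (neck_len c) * x ^ neck_len c) {c. bal_necklace c}"

end

theory Submission
  imports Defs
begin

(*
  A draw (n, w) with n >= 1 and w balanced produces the necklace of w^n.  Its weight
  phi(n) * x^(n|w|) is, up to the factor 1/C11(x), its probability.  The theorem rests on
  one combinatorial identity: for a balanced necklace c of length L the draws producing c
  have total totient weight L.  It is proved by
    (1) a bijection between such draws and pairs (v, n) with v a rotation of the
        representative and v an n-th power of a word (v = z^n);
    (2) the gcd-partition of the rotations fixing v, giving
        sum_{n : v is an n-th power} phi(n) = #{0 < j <= L. rotate j v = v};
    (3) orbit counting: summing these stabiliser sizes over the necklace gives L.
  Analytically, balanced words of length 2p number binom(2p,p), so the weights y^|w| of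
  balanced words sum to S11(y); summing over n gives C11(x), and regrouping all draws by
  their output necklace shows that the generating function of pointed balanced necklaces
  is C11(x) as well.  The main theorem is then a matter of dividing by C11(x).
*)

section \<open>Rotations and periodic words\<close>

lemma rotate_fixed_mult: "rotate g v = v \<Longrightarrow> rotate (g * m) v = v"
proof (induction m)
  case (Suc m)
  have "rotate (g * Suc m) v = rotate g (rotate (g * m) v)" by (simp add: rotate_rotate)
  then show ?case using Suc by simp
qed simp

text \<open>The rotations fixing a word of length L are exactly those by multiples of a divisor:
  rotating by k fixes v iff rotating by gcd k L does (Bezout).\<close>
lemma rotate_fixed_gcd:
  assumes "length v = L" "0 < L"
  shows "rotate k v = v \<longleftrightarrow> rotate (gcd k L) v = v"
proof
  assume h: "rotate (gcd k L) v = v"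
  obtain m where "k = gcd k L * m" by (metis dvd_def gcd_dvd1)
  then show "rotate k v = v" using rotate_fixed_mult[OF h, of m] by simp
next
  assume h: "rotate k v = v"
  show "rotate (gcd k L) v = v"
  proof (cases "k = 0")
    case True then show ?thesis using assms by simp
  next
    case False
    then obtain a b where ab: "k * a = L * b + gcd k L" using bezout_nat by blast
    have "rotate (gcd k L) v = rotate ((gcd k L) mod L) v"
      using rotate_conv_mod[of "gcd k L" v] assms(1) by simp
    also have "(gcd k L) mod L = (k * a) mod L" using ab by simp
    also have "rotate ((k * a) mod L) v = rotate (k * a) v"
      using rotate_conv_mod[of "k * a" v] assms(1) by simp
    also have "\<dots> = v" using rotate_fixed_mult[OF h] by simp
    finally show ?thesis .
  qed
qed

lemma periodic_nth:
  assumes "rotate m v = v" "0 < m" "m \<le> length v" "i < length v"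
  shows "v ! i = v ! (i mod m)"
  using assms(4)
proof (induction i rule: less_induct)
  case (less i)
  show ?case
  proof (cases "i < m")
    case False
    have "v ! (i - m) = rotate m v ! (i - m)" using assms by simp
    also have "\<dots> = v ! i" using less.prems False by (simp add: nth_rotate)
    finally have "v ! i = v ! (i - m)" by simp
    also have "\<dots> = v ! ((i - m) mod m)" using less False assms by simp
    also have "(i - m) mod m = i mod m" using False by (simp add: le_mod_geq)
    finally show ?thesis .
  qed simp
qed

lemma length_wpow [simp]: "length (wpow w n) = n * length w"
  by (simp add: wpow_def length_concat sum_list_replicate)

lemma nth_wpow: "i < n * length w \<Longrightarrow> wpow w n ! i = w ! (i mod length w)"
proof (induction n arbitrary: i)
  case (Suc n)
  have split: "wpow w (Suc n) = w @ wpow w n" by (simp add: wpow_def)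
  show ?case
  proof (cases "i < length w")
    case False
    then have "i - length w < n * length w" using Suc.prems by auto
    then show ?thesis using False Suc.IH by (simp add: split nth_append le_mod_geq)
  qed (simp add: split nth_append)
qed simp

lemma take_wpow: "1 \<le> n \<Longrightarrow> take (length w) (wpow w n) = w"
  by (cases n) (auto simp: wpow_def)

lemma rotate_wpow: "rotate (length w) (wpow w n) = wpow w n"
proof (cases n)
  case (Suc m)
  have "rotate (length w) (wpow w n) = concat (replicate m w @ [w])"
    using Suc by (simp add: wpow_def rotate_append)
  also have "\<dots> = wpow w n" using Suc by (simp add: wpow_def replicate_append_same)
  finally show ?thesis .
qed (simp add: wpow_def)

lemma periodic_eq_wpow:
  assumes "0 < m" "length v = m * k" "rotate m v = v"
  shows "wpow (take m v) k = v"
proof (cases "k = 0")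
  case True then show ?thesis using assms by (simp add: wpow_def)
next
  case False
  then have ml: "m \<le> length v" using assms by simp
  show ?thesis
  proof (rule nth_equalityI)
    show "length (wpow (take m v) k) = length v" using assms ml by (simp add: min_def)
    fix i assume "i < length (wpow (take m v) k)"
    then have i: "i < k * m" using ml by (auto simp: min_def split: if_splits)
    have "wpow (take m v) k ! i = v ! (i mod m)"
      using nth_wpow[of i k "take m v"] i ml assms(1) by (simp add: min_def)
    also have "\<dots> = v ! i"
      using periodic_nth[OF assms(3) assms(1) ml] i assms(2) by (simp add: mult.commute)
    finally show "wpow (take m v) k ! i = v ! i" .
  qed
qed

lemma count_wpow: "count_list (wpow w n) a = n * count_list w a"
  by (induction n) (auto simp: wpow_def)

lemma count_rotate: "count_list (rotate k u) a = count_list u a"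
  unfolding rotate_drop_take by (metis append_take_drop_id count_list_append add.commute)


section \<open>Necklaces\<close>

lemma necklace_length: "v \<in> necklace u \<Longrightarrow> length v = length u"
  by (auto simp: necklace_def)

lemma self_in_necklace: "u \<in> necklace u"
  unfolding necklace_def by (metis (mono_tags) mem_Collect_eq rotate0 id_apply)

lemma necklace_image: "u \<noteq> [] \<Longrightarrow> necklace u = (\<lambda>k. rotate k u) ` {0..<length u}"
  unfolding necklace_def
  by (auto simp: image_iff intro: exI[of _ "_ mod length u"] rotate_conv_mod)

lemma finite_necklace: "finite (necklace u)"
proof (cases "u = []")
  case True then show ?thesis by (simp add: necklace_def)
qed (simp add: necklace_image)

lemma necklace_eq_iff: "necklace v = necklace u \<longleftrightarrow> v \<in> necklace u"
proof
  show "necklace v = necklace u \<Longrightarrow> v \<in> necklace u" using self_in_necklace[of v] by simp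
next
  assume "v \<in> necklace u"
  then obtain k where k: "v = rotate k u" by (auto simp: necklace_def)
  show "necklace v = necklace u"
  proof (cases "u = []")
    case True then show ?thesis using k by simp
  next
    case False
    let ?L = "length u"
    have "rotate i u \<in> necklace v" for i
    proof -
      have e: "i + ?L * k - k + k = i + ?L * k" using False by (cases ?L) auto
      have "rotate (i + ?L * k - k) v = rotate (i + ?L * k) u"
        using k by (simp only: rotate_rotate e)
      also have "\<dots> = rotate i u"
        using rotate_conv_mod[of "i + ?L * k" u] rotate_conv_mod[of i u] by simp
      finally show ?thesis unfolding necklace_def by (metis (mono_tags, lifting) mem_Collect_eq)
    qed
    moreover have "rotate j v \<in> necklace u" for j
      using k unfolding necklace_def by (auto simp: rotate_rotate)
    ultimately show ?thesis unfolding necklace_def by blast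
  qed
qed

lemma neck_len_necklace: "neck_len (necklace u) = length u"
proof -
  have "(SOME w. w \<in> necklace u) \<in> necklace u" using self_in_necklace by (rule someI)
  then show ?thesis unfolding neck_len_def by (rule necklace_length)
qed

text \<open>Orbit--stabiliser for the cyclic action: the positions k < L rotating u onto a given
  rotation v are a translate of the stabiliser of v (taken in 0 < j \<le> L).\<close>
lemma card_rotations_onto:
  assumes u: "u \<noteq> []" and v: "v \<in> necklace u"
  shows "card {k\<in>{0..<length u}. rotate k u = v} = card {j\<in>{0<..length u}. rotate j v = v}"
proof -
  let ?L = "length u"
  define S where "S = {j\<in>{0<..?L}. rotate j v = v}"
  obtain i where i: "i < ?L" and vi: "v = rotate i u" using necklace_image[OF u] v by auto
  define shift where "shift j = (i + j) mod ?L" for j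
  have rotate_shift: "rotate (shift j) u = rotate j v" for j
    unfolding shift_def vi rotate_rotate rotate_conv_mod[of "i + j" u, symmetric] by (simp add: add.commute)
  have inj: "inj_on shift S"
  proof (rule inj_onI)
    fix j j' assume "j \<in> S" "j' \<in> S" "shift j = shift j'"
    then have "j mod ?L = j' mod ?L" "j \<in> {0<..?L}" "j' \<in> {0<..?L}"
      by (auto simp: S_def shift_def nat_mod_eq_iff)
    then show "j = j'"
      by (cases "j = ?L"; cases "j' = ?L") auto
  qed
  have "{k\<in>{0..<?L}. rotate k u = v} = shift ` S"
  proof (intro equalityI subsetI)
    fix k assume "k \<in> shift ` S"
    then obtain j where "j \<in> S" "k = shift j" by auto
    then show "k \<in> {k\<in>{0..<?L}. rotate k u = v}"
      using rotate_shift[of j] u by (simp add: S_def shift_def)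
  next
    fix k assume "k \<in> {k\<in>{0..<?L}. rotate k u = v}"
    then have kL: "k < ?L" and rk: "rotate k u = v" by auto
    define j where "j = (if i < k then k - i else k + ?L - i)"
    have j: "j \<in> {0<..?L}" "shift j = k" using i kL by (auto simp: shift_def j_def)
    then have "rotate j v = v" using rotate_shift[of j] rk by simp
    then have "j \<in> S" using j by (simp add: S_def)
    then show "k \<in> shift ` S" using j(2) by blast
  qed
  then show ?thesis using card_image[OF inj] by (simp add: S_def)
qed

lemma necklace_stabiliser_sum:
  assumes u: "u \<noteq> []"
  shows "(\<Sum>v\<in>necklace u. card {j\<in>{0<..length u}. rotate j v = v}) = length u"
proof -
  let ?L = "length u"
  have "?L = card (\<Union>v\<in>necklace u. {k\<in>{0..<?L}. rotate k u = v})"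
    by (rule arg_cong[where f = card, of "{0..<?L}", simplified])
       (auto simp: necklace_def)
  also have "\<dots> = (\<Sum>v\<in>necklace u. card {k\<in>{0..<?L}. rotate k u = v})"
    by (rule card_UN_disjoint) (auto simp: finite_necklace)
  also have "\<dots> = (\<Sum>v\<in>necklace u. card {j\<in>{0<..?L}. rotate j v = v})"
    using card_rotations_onto[OF u] by (intro sum.cong) auto
  finally show ?thesis by simp
qed


section \<open>Words that are powers, and the totient identity\<close>

text \<open>The exponents n for which v is an n-th power of some word.\<close>
definition power_degrees :: "'a list \<Rightarrow> nat set" where
  "power_degrees v = {n. n dvd length v \<and> rotate (length v div n) v = v}"

lemma finite_power_degrees: "v \<noteq> [] \<Longrightarrow> finite (power_degrees v)"
  unfolding power_degrees_def by (rule finite_subset[OF _ finite_divisors_nat[of "length v"]]) auto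

text \<open>Partitioning the rotations fixing v by their gcd with L: each class gcd k L = L/n has
  phi(n) elements (library fact), so the power degrees of v carry total totient weight
  equal to the size of the stabiliser of v.\<close>
lemma totient_sum_power_degrees:
  assumes "v \<noteq> []"
  shows "(\<Sum>n\<in>power_degrees v. totient n) = card {j\<in>{0<..length v}. rotate j v = v}"
proof -
  let ?L = "length v"
  have L0: "0 < ?L" using assms by simp
  define G where "G n = {k\<in>{0<..?L}. gcd k ?L = ?L div n}" for n
  have complement_dvd: "?L div n dvd ?L" "?L div (?L div n) = n" if "n dvd ?L" for n
  proof -
    from that obtain m where m: "?L = n * m" by (rule dvdE)
    then have "0 < n" "0 < m" using L0 by auto
    then show "?L div n dvd ?L" "?L div (?L div n) = n" using m by simp_all
  qed
  have U: "{j\<in>{0<..?L}. rotate j v = v} = (\<Union>n\<in>power_degrees v. G n)"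
  proof (intro equalityI subsetI)
    fix k assume k: "k \<in> {j\<in>{0<..?L}. rotate j v = v}"
    define g where "g = gcd k ?L"
    have "g dvd ?L" by (simp add: g_def)
    note g = complement_dvd[OF this]
    have "rotate g v = v" using k rotate_fixed_gcd[OF refl L0, of k] by (simp add: g_def)
    then have "?L div g \<in> power_degrees v" "k \<in> G (?L div g)"
      using k g by (auto simp: power_degrees_def G_def g_def)
    then show "k \<in> (\<Union>n\<in>power_degrees v. G n)" by blast
  next
    fix k assume "k \<in> (\<Union>n\<in>power_degrees v. G n)"
    then obtain n where "n \<in> power_degrees v" "k \<in> G n" by blast
    then have "rotate (gcd k ?L) v = v" "k \<in> {0<..?L}" by (auto simp: power_degrees_def G_def)
    then show "k \<in> {j\<in>{0<..?L}. rotate j v = v}"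
      using rotate_fixed_gcd[OF refl L0, of k] by simp
  qed
  have "card (\<Union>n\<in>power_degrees v. G n) = (\<Sum>n\<in>power_degrees v. card (G n))"
  proof (rule card_UN_disjoint[OF finite_power_degrees[OF assms]])
    show "\<forall>n\<in>power_degrees v. \<forall>n'\<in>power_degrees v. n \<noteq> n' \<longrightarrow> G n \<inter> G n' = {}"
    proof (intro ballI impI)
      fix n n' assume "n \<in> power_degrees v" "n' \<in> power_degrees v" "n \<noteq> n'"
      then have "?L div n \<noteq> ?L div n'"
        using complement_dvd(2)[of n] complement_dvd(2)[of n'] by (auto simp: power_degrees_def)
      then show "G n \<inter> G n' = {}" by (auto simp: G_def)
    qed
  qed (simp add: G_def)
  also have "\<dots> = (\<Sum>n\<in>power_degrees v. totient n)"
  proof (rule sum.cong[OF refl])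
    fix n assume "n \<in> power_degrees v"
    then have "n dvd ?L" by (simp add: power_degrees_def)
    with card_gcd_eq_totient[OF L0 complement_dvd(1)] complement_dvd(2)
    show "card (G n) = totient n" by (simp add: G_def)
  qed
  finally show ?thesis using U by simp
qed


section \<open>Draws producing a given necklace\<close>

lemma draws_to_necklace:
  assumes "balanced11 u"
  shows "draws_to (necklace u) = {(n, w). 1 \<le> n \<and> w \<noteq> [] \<and> wpow w n \<in> necklace u}"
proof -
  have "balanced11 w \<longleftrightarrow> w \<noteq> []" if n: "1 \<le> n" and k: "wpow w n = rotate k u" for n w k
  proof -
    have "n * count_list w a = count_list u a" for a
      using count_wpow[of w n a] count_rotate[of k u a] k by simp
    then have "n * count_list w True = n * count_list w False"
      using assms by (simp add: balanced11_def)
    then show ?thesis using n by (simp add: balanced11_def)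
  qed
  then show ?thesis
    unfolding draws_to_def necklace_eq_iff by (auto simp: necklace_def balanced11_def)
qed

lemma draws_to_bij:
  assumes bal: "balanced11 u"
  shows "bij_betw (\<lambda>(v, n). (n, take (length v div n) v))
           (Sigma (necklace u) power_degrees) (draws_to (necklace u))"
proof -
  let ?c = "necklace u"
  have L0: "0 < length u" using bal by (simp add: balanced11_def)
  note D = draws_to_necklace[OF bal]
  have root: "wpow (take (length v div n) v) n = v \<and> (n, take (length v div n) v) \<in> draws_to ?c"
    if v: "v \<in> ?c" and n: "n \<in> power_degrees v" for v n
  proof -
    have lv: "length v = length u" using v by (rule necklace_length)
    from n have dv: "n dvd length v" and rot: "rotate (length v div n) v = v"
      by (auto simp: power_degrees_def)
    from dv obtain m where m: "length v = n * m" by (rule dvdE)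
    have nm0: "0 < n" "0 < m" using m lv L0 by auto
    have md: "length v div n = m" using m nm0 by simp
    have "wpow (take m v) n = v"
      using periodic_eq_wpow[OF nm0(2) _ rot[unfolded md]] m by (simp add: mult.commute)
    moreover have "take m v \<noteq> []" using nm0 m by (cases v) auto
    ultimately show ?thesis using v nm0 by (simp add: D md)
  qed
  have power: "(wpow w n, n) \<in> Sigma ?c power_degrees \<and> take (length (wpow w n) div n) (wpow w n) = w"
    if "(n, w) \<in> draws_to ?c" for n w
  proof -
    have nw: "1 \<le> n" "w \<noteq> []" "wpow w n \<in> ?c" using that D by auto
    have "length (wpow w n) div n = length w" using nw(1) by simp
    then show ?thesis using nw rotate_wpow take_wpow[OF nw(1)] by (simp add: power_degrees_def)
  qed
  show ?thesis
    by (rule bij_betw_byWitness[where f' = "\<lambda>(n, w). (wpow w n, n)"]) (use root power in auto)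
qed

lemma draws_to_length:
  "balanced11 u \<Longrightarrow> (n, w) \<in> draws_to (necklace u) \<Longrightarrow> n * length w = length u"
  using necklace_length by (fastforce simp: draws_to_necklace)

lemma finite_draws_to:
  assumes "balanced11 u"
  shows "finite (draws_to (necklace u))"
proof -
  have "v \<noteq> []" if "v \<in> necklace u" for v
    using necklace_length[OF that] assms by (auto simp: balanced11_def)
  then have "finite (Sigma (necklace u) power_degrees)"
    using finite_necklace finite_power_degrees by blast
  then show ?thesis using bij_betw_finite[OF draws_to_bij[OF assms]] by simp
qed

lemma draws_to_totient_sum:
  assumes bal: "balanced11 u"
  shows "(\<Sum>(n, w)\<in>draws_to (necklace u). totient n) = length u"
proof -
  let ?c = "necklace u"
  have u: "u \<noteq> []" using bal by (simp add: balanced11_def)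
  have ne: "v \<noteq> []" if "v \<in> ?c" for v using necklace_length[OF that] u by auto
  have "(\<Sum>(n, w)\<in>draws_to ?c. totient n) = (\<Sum>(v, n)\<in>Sigma ?c power_degrees. totient n)"
    using sum.reindex_bij_betw[OF draws_to_bij[OF bal], of "\<lambda>(n, w). totient n"]
    by (simp add: case_prod_unfold)
  also have "\<dots> = (\<Sum>v\<in>?c. \<Sum>n\<in>power_degrees v. totient n)"
    using finite_necklace finite_power_degrees ne by (subst sum.Sigma) auto
  also have "\<dots> = (\<Sum>v\<in>?c. card {j\<in>{0<..length u}. rotate j v = v})"
  proof (rule sum.cong[OF refl])
    fix v assume "v \<in> ?c"
    then show "(\<Sum>n\<in>power_degrees v. totient n) = card {j\<in>{0<..length u}. rotate j v = v}"
      using totient_sum_power_degrees[OF ne] necklace_length by metis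
  qed
  also have "\<dots> = length u" by (rule necklace_stabiliser_sum[OF u])
  finally show ?thesis .
qed


section \<open>Generating functions\<close>

text \<open>Words of length n with k letters a correspond to the k-subsets of positions carrying a;
  for n = 2k these are the balanced words, counted by the central binomial coefficient.\<close>
lemma card_words_count:
  "card {w :: bool list. length w = n \<and> count_list w True = k} = n choose k"
proof -
  have "bij_betw (\<lambda>w. {i. i < n \<and> w ! i})
          {w :: bool list. length w = n \<and> count_list w True = k} {K \<in> Pow {0..<n}. card K = k}"
    by (rule bij_betw_byWitness[where f' = "\<lambda>K. map (\<lambda>i. i \<in> K) [0..<n]"])
       (auto simp: count_list_eq_length_filter length_filter_conv_card intro!: nth_equalityI
             arg_cong[where f = card])
  then show ?thesis unfolding binomial_def by (rule bij_betw_same_card)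
qed

lemma nonneg_has_sum_SigmaI:
  fixes f :: "'a \<times> 'b \<Rightarrow> real"
  assumes "\<And>a. a \<in> A \<Longrightarrow> ((\<lambda>b. f (a, b)) has_sum g a) (B a)" "(g has_sum S) A"
    and "\<And>a b. a \<in> A \<Longrightarrow> b \<in> B a \<Longrightarrow> 0 \<le> f (a, b)"
  shows "(f has_sum S) (Sigma A B)"
proof (rule has_sum_SigmaI[where g = g])
  show "f summable_on Sigma A B"
    by (rule summable_on_SigmaI[where g = g]) (use assms has_sum_imp_summable in auto)
qed (use assms in auto)

definition central_binomial_term :: "real \<Rightarrow> nat \<Rightarrow> real" where
  "central_binomial_term y p = real ((2 * p) choose p) * y ^ (2 * p)"

text \<open>The central binomial series converges for |y| < 1/2, by comparison with (4y^2)^p.\<close>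
lemma central_binomial_summable:
  assumes "0 \<le> y" "y < 1/2"
  shows "summable (central_binomial_term y)"
proof (rule summable_comparison_test'[where N = 0])
  have "y * y < 1/2 * (1/2)" using assms by (intro mult_strict_mono') auto
  then show "summable (\<lambda>p. (4 * y^2) ^ p)"
    using assms by (intro summable_geometric) (simp add: power2_eq_square)
  fix p
  have "real ((2 * p) choose p) \<le> 4 ^ p"
    using binomial_le_pow2[of "2 * p" p] by (simp add: power_mult flip: of_nat_le_iff)
  then have "central_binomial_term y p \<le> 4 ^ p * (y^2) ^ p"
    unfolding central_binomial_term_def using assms by (simp add: mult_right_mono power_mult)
  then show "norm (central_binomial_term y p) \<le> (4 * y^2) ^ p"
    by (simp add: central_binomial_term_def power_mult_distrib)
qed

lemma S11_has_sum:
  assumes "0 \<le> y" "y < 1/2"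
  shows "(central_binomial_term y has_sum S11 y) {1..}"
proof -
  have "(central_binomial_term y has_sum suminf (central_binomial_term y)) UNIV"
    using summable_sums[OF central_binomial_summable[OF assms]] assms
    by (intro sums_nonneg_imp_has_sum) (auto simp: central_binomial_term_def)
  from has_sum_Diff[OF this has_sum_finiteI[of "{0}"]]
  have "(central_binomial_term y has_sum (suminf (central_binomial_term y) - 1)) (UNIV - {0})"
    by (simp add: central_binomial_term_def)
  moreover have "UNIV - {0} = {1 :: nat..}" by auto
  ultimately show ?thesis by (simp add: S11_def central_binomial_term_def[abs_def])
qed

lemma S11_pos:
  assumes "0 < y" "y < 1/2"
  shows "0 < S11 y"
proof (rule has_sum_strict_mono_neutral[OF has_sum_0 S11_has_sum])
  show "1 \<in> {1 :: nat..}" by simp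
  show "if 1 \<in> {} then 0 < central_binomial_term y 1 else 0 < central_binomial_term y 1"
    using assms by (simp add: central_binomial_term_def)
qed (use assms in \<open>auto simp: central_binomial_term_def\<close>)

lemma S11_le_scaled:
  assumes "0 \<le> y" "y \<le> x" "0 < x" "x < 1/2"
  shows "S11 y \<le> (y / x)^2 * S11 x"
proof (rule has_sum_mono[OF S11_has_sum has_sum_cmult_right[OF S11_has_sum]])
  fix p :: nat assume "p \<in> {1..}"
  then have "2 \<le> 2 * p" by simp
  then have "(y / x) ^ (2 * p) \<le> (y / x)^2"
    using assms by (intro power_decreasing) (auto simp: divide_le_eq_1)
  then have "(y / x) ^ (2 * p) * x ^ (2 * p) \<le> (y / x)^2 * x ^ (2 * p)"
    using assms by (intro mult_right_mono) auto
  also have "(y / x) ^ (2 * p) * x ^ (2 * p) = y ^ (2 * p)"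
    using assms by (simp add: power_divide)
  finally have "y ^ (2 * p) \<le> (y / x)^2 * x ^ (2 * p)" .
  then have "real ((2 * p) choose p) * y ^ (2 * p) \<le> real ((2 * p) choose p) * ((y / x)^2 * x ^ (2 * p))"
    by (rule mult_left_mono) simp
  then show "central_binomial_term y p \<le> (y / x)^2 * central_binomial_term x p"
    unfolding central_binomial_term_def by (simp only: mult.left_commute)
qed (use assms in auto)

lemma balanced_words_has_sum:
  assumes y: "0 \<le> y" "y < 1/2"
  shows "((\<lambda>w. y ^ length w) has_sum S11 y) {w. balanced11 w}"
proof -
  define W where "W p = {w :: bool list. length w = 2 * p \<and> count_list w True = p}" for p
  have count_total: "count_list w True + count_list w False = length w" for w :: "bool list"
    by (induction w) auto
  have finW: "finite (W p)" for p
    using finite_lists_length_eq[of "UNIV :: bool set" "2 * p"]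
    by (auto simp: W_def intro: rev_finite_subset)
  have fibre: "((\<lambda>w. y ^ length w) has_sum central_binomial_term y p) (W p)" for p
  proof (rule has_sum_finiteI[OF finW])
    have "(\<Sum>w\<in>W p. y ^ length w) = real (card (W p)) * y ^ (2 * p)"
      by (simp add: W_def)
    then show "central_binomial_term y p = (\<Sum>w\<in>W p. y ^ length w)"
      using card_words_count[of "2 * p" p] by (simp add: W_def central_binomial_term_def)
  qed
  have "((\<lambda>(p, w). y ^ length w) has_sum S11 y) (Sigma {1..} W)"
    by (rule nonneg_has_sum_SigmaI[where f = "\<lambda>(p, w). y ^ length w", OF _ S11_has_sum[OF y]])
       (use fibre y in auto)
  then have "((\<lambda>w. y ^ length w) has_sum S11 y) (snd ` Sigma {1..} W)"
    by (subst has_sum_reindex) (auto simp: inj_on_def W_def o_def case_prod_unfold)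
  also have "snd ` Sigma {1..} W = {w. balanced11 w}"
  proof (intro equalityI subsetI)
    fix w assume "w \<in> {w. balanced11 w}"
    then have ne: "w \<noteq> []" and len: "length w = 2 * count_list w True"
      using count_total[of w] by (auto simp: balanced11_def)
    then have "count_list w True \<noteq> 0" by (metis length_0_conv mult_0_right)
    then have "w \<in> W (count_list w True)" "count_list w True \<in> {1..}"
      using len by (auto simp: W_def)
    then show "w \<in> snd ` Sigma {1..} W" by force
  next
    fix w assume "w \<in> snd ` Sigma {1..} W"
    then obtain p where "1 \<le> p" "w \<in> W p" by auto
    then show "w \<in> {w. balanced11 w}" using count_total[of w] by (auto simp: W_def balanced11_def)
  qed
  finally show ?thesis .
qed

lemma power_in_unit_half:
  fixes x :: real
  assumes "0 < x" "x < 1/2" "1 \<le> n"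
  shows "0 < x ^ n" "x ^ n \<le> x" "x ^ n < 1/2"
proof -
  show "0 < x ^ n" using assms by simp
  show le: "x ^ n \<le> x" using power_decreasing[of 1 n x] assms by simp
  show "x ^ n < 1/2" using le assms by simp
qed

text \<open>The series defining C11 converges (dominated by S11 x (2 x^2)^m), as a sum over n \<ge> 1.\<close>
lemma C11_has_sum:
  assumes x: "0 < x" "x < 1/2"
  shows "((\<lambda>n. real (totient n) * S11 (x ^ n)) has_sum C11 x) {1..}"
proof -
  define g where "g m = real (totient (Suc m)) * S11 (x ^ Suc m)" for m
  have xs: "0 < x ^ Suc m" "x ^ Suc m \<le> x" "x ^ Suc m < 1/2" for m
    using power_in_unit_half[OF x, of "Suc m"] by auto
  have g_nonneg: "0 \<le> g m" for m
    using S11_pos[OF xs(1) xs(3), of m] by (simp add: g_def del: power_Suc)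
  have g_le: "g m \<le> S11 x * (2 * x^2) ^ m" for m
  proof -
    have "S11 (x ^ Suc m) \<le> (x ^ Suc m / x)^2 * S11 x"
      using xs[of m] x by (intro S11_le_scaled) auto
    also have "(x ^ Suc m / x)^2 = (x^2) ^ m" using x by (simp add: power_mult[symmetric] mult.commute)
    finally have S: "S11 (x ^ Suc m) \<le> (x^2) ^ m * S11 x" .
    have "totient (Suc m) \<le> 2 ^ m"
      using totient_le[of "Suc m"] by (metis Suc_leI less_exp order_trans)
    then have T: "real (totient (Suc m)) \<le> 2 ^ m" by (simp flip: of_nat_le_iff)
    have "g m \<le> 2 ^ m * ((x^2) ^ m * S11 x)"
      unfolding g_def using S T S11_pos[OF xs(1) xs(3), of m] by (intro mult_mono) auto
    then show ?thesis by (simp add: power_mult_distrib mult_ac)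
  qed
  have "x * x < 1/2 * (1/2)" using x by (intro mult_strict_mono') auto
  then have "2 * x^2 < 1" by (simp add: power2_eq_square)
  then have "summable (\<lambda>m. S11 x * (2 * x^2) ^ m)" using x by (intro summable_mult summable_geometric) simp
  then have "summable g" by (rule summable_comparison_test'[where N = 0]) (use g_nonneg g_le in auto)
  moreover have "C11 x = suminf g" by (simp only: C11_def g_def[abs_def])
  ultimately have "(g has_sum C11 x) UNIV"
    by (intro sums_nonneg_imp_has_sum) (auto simp: g_nonneg summable_sums)
  then have "(((\<lambda>n. real (totient n) * S11 (x ^ n)) \<circ> Suc) has_sum C11 x) UNIV"
    by (simp only: o_def g_def[abs_def])
  then have "((\<lambda>n. real (totient n) * S11 (x ^ n)) has_sum C11 x) (Suc ` UNIV)"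
    by (subst has_sum_reindex) auto
  also have "Suc ` UNIV = {1..}" by (auto simp: image_iff Suc_le_eq gr0_conv_Suc)
  finally show ?thesis .
qed

definition draw_weight :: "real \<Rightarrow> nat \<times> bool list \<Rightarrow> real" where
  "draw_weight x = (\<lambda>(n, w). real (totient n) * x ^ (n * length w))"

lemma draw_prob_eq:
  assumes "0 < x" "x < 1/2" "1 \<le> n"
  shows "draw_prob x n w = draw_weight x (n, w) / C11 x"
  using S11_pos[OF power_in_unit_half(1,3)[OF assms]]
  by (simp add: draw_prob_def draw_weight_def field_simps)

text \<open>All draws together have total weight C11 x, so the procedure is a probability law.\<close>
lemma draws_has_sum:
  assumes x: "0 < x" "x < 1/2"
  shows "(draw_weight x has_sum C11 x) ({1..} \<times> {w. balanced11 w})"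
proof (rule nonneg_has_sum_SigmaI[OF _ C11_has_sum[OF x]])
  fix n :: nat assume "n \<in> {1..}"
  then have "0 < x ^ n" "x ^ n < 1/2" using power_in_unit_half[OF x, of n] by auto
  then have "((\<lambda>w. (x ^ n) ^ length w) has_sum S11 (x ^ n)) {w. balanced11 w}"
    by (intro balanced_words_has_sum) auto
  then show "((\<lambda>w. draw_weight x (n, w)) has_sum real (totient n) * S11 (x ^ n)) {w. balanced11 w}"
    unfolding draw_weight_def by (simp add: has_sum_cmult_right power_mult)
qed (use x in \<open>auto simp: draw_weight_def\<close>)

lemma draws_to_has_sum:
  assumes "bal_necklace c"
  shows "(draw_weight x has_sum (real (neck_len c) * x ^ neck_len c)) (draws_to c)"
proof -
  obtain u where u: "balanced11 u" "c = necklace u" using assms by (auto simp: bal_necklace_def)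
  have "(\<Sum>d\<in>draws_to c. draw_weight x d) = (\<Sum>(n, w)\<in>draws_to c. real (totient n) * x ^ length u)"
    using draws_to_length[OF u(1)] u(2) by (intro sum.cong) (auto simp: draw_weight_def)
  also have "\<dots> = real (\<Sum>(n, w)\<in>draws_to c. totient n) * x ^ length u"
    by (simp add: sum_distrib_right case_prod_unfold)
  also have "\<dots> = real (neck_len c) * x ^ neck_len c"
    using draws_to_totient_sum[OF u(1)] u(2) by (simp add: neck_len_necklace)
  finally show ?thesis using finite_draws_to[OF u(1)] u(2) by (intro has_sum_finiteI) auto
qed

text \<open>Regrouping all draws by their output necklace: the generating function of pointed
  balanced necklaces equals C11.\<close>
lemma ThetaCyc11_has_sum:
  assumes x: "0 < x" "x < 1/2"
  shows "((\<lambda>c. real (neck_len c) * x ^ neck_len c) has_sum C11 x) {c. bal_necklace c}"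
proof (rule has_sum_SigmaD[where f = "\<lambda>(c, d). draw_weight x d"])
  define Sg where "Sg = Sigma {c. bal_necklace c} draws_to"
  have "snd ` Sg = {1..} \<times> {w. balanced11 w}"
  proof (intro equalityI subsetI)
    fix d assume "d \<in> {1 :: nat..} \<times> {w. balanced11 w}"
    then obtain n w where d: "d = (n, w)" "1 \<le> n" "balanced11 w" by auto
    then have "0 < length (wpow w n)" by (simp add: balanced11_def)
    then have "wpow w n \<noteq> []" by (metis length_greater_0_conv)
    then have "balanced11 (wpow w n)" using d by (simp add: balanced11_def count_wpow)
    then have "(necklace (wpow w n), d) \<in> Sg"
      using d by (auto simp: Sg_def draws_to_def bal_necklace_def)
    then show "d \<in> snd ` Sg" by force
  qed (auto simp: Sg_def draws_to_def)
  then have "(draw_weight x has_sum C11 x) (snd ` Sg)" using draws_has_sum[OF x] by simp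
  then show "((\<lambda>(c, d). draw_weight x d) has_sum C11 x) (Sigma {c. bal_necklace c} draws_to)"
    by (subst (asm) has_sum_reindex) (auto simp: Sg_def inj_on_def draws_to_def o_def case_prod_unfold)
qed (use draws_to_has_sum in auto)


theorem mainTheorem5:
  fixes x :: real
  assumes "0 < x" and "x < 1/2"
  shows "\<forall>c. bal_necklace c \<longrightarrow>
           ((\<lambda>(n, w). draw_prob x n w) has_sum
              (real (neck_len c) * x ^ neck_len c / C11 x)) (draws_to c)
         \<and> (\<forall>i \<in> {1..neck_len c}.
              out_prob x c * (1 / real (neck_len c)) = x ^ neck_len c / ThetaCyc11 x)"
proof (intro allI impI conjI ballI)
  fix c assume c: "bal_necklace c"
  have "((\<lambda>d. draw_weight x d / C11 x) has_sum (real (neck_len c) * x ^ neck_len c / C11 x))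
          (draws_to c)"
    using draws_to_has_sum[OF c] by (rule has_sum_divide_const)
  moreover have "(\<lambda>(n, w). draw_prob x n w) d = draw_weight x d / C11 x" if "d \<in> draws_to c" for d
    using that draw_prob_eq[OF assms] by (auto simp: draws_to_def)
  ultimately show out: "((\<lambda>(n, w). draw_prob x n w) has_sum
              (real (neck_len c) * x ^ neck_len c / C11 x)) (draws_to c)"
    by (subst has_sum_cong) auto
  fix i assume "i \<in> {1..neck_len c}"
  then have "0 < neck_len c" by simp
  moreover have "out_prob x c = real (neck_len c) * x ^ neck_len c / C11 x"
    unfolding out_prob_def using out by (rule infsumI)
  moreover have "ThetaCyc11 x = C11 x"
    unfolding ThetaCyc11_def using ThetaCyc11_has_sum[OF assms] by (rule infsumI)
  ultimately show "out_prob x c * (1 / real (neck_len c)) = x ^ neck_len c / ThetaCyc11 x"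
    by simp
qed

end
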